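(* For any positive integers $n$ and $k$ there exists a QCQP in $N:=nk$ variables with $m:=k+1$ constraints such that: Assumptions A and C hold; the quadratic eigenvalue multiplicity of the QCQP equals $k$; $k\ge \operatorname{affdim}(\{b(\gamma):\gamma\in\mathcal F\})$ for every semidefinite face $\mathcal F$ of $\Gamma$; but $\mathrm{Opt}\neq\mathrm{Opt}_{\mathrm{SDP}}$ (and hence $\operatorname{conv}(\mathcal D)\neq\mathcal D_{\mathrm{SDP}}$).
   Context: A QCQP is given by integers $N\ge 1$, $m_I,m_E\ge 0$, $m:=m_I+m_E\ge 1$ and, for $i\in[0,m]$ ($[a,b]=\{a,\dots,b\}$, $[n]=[1,n]$), $q_i(x)=x^\top A_ix+2b_i^\top x+c_i$ with $A_i\in\mathbb S^N$, $b_i\in\mathbb R^N$, $c_i\in\mathbb R$. $\mathrm{Opt}:=\inf\{q_0(x): q_i(x)\le 0\ \forall i\in[m_I],\ q_i(x)=0\ \forall i\in[m_I+1,m]\}$; $\mathcal D:=\{(x,t): q_0(x)\le 2t$ and the same constraints$\}$. With $Q_i=\begin{pmatrix}c_i& b_i^\top\\ b_i& A_i\end{pmatrix}$: $\mathrm{Opt}_{\mathrm{SDP}}:=\inf\{\langle Q_0,Y\rangle: Y=\begin{pmatrix}1&x^\top\\ x& X\end{pmatrix}\succeq 0,\ X\in\mathbb S^N,\ \langle Q_i,Y\rangle\le 0\ \forall i\in[m_I],\ \langle Q_i,Y\rangle=0\ \forall i\in[m_I+1,m]\}$; $\mathcal D_{\mathrm{SDP}}:=\{(x,t):\exists X$ with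 $Y\succeq0$, $\langle Q_0,Y\rangle\le 2t$ and the same constraints$\}$. $A(\gamma)=A_0+\sum\gamma_iA_i$, $b(\gamma)=b_0+\sum\gamma_ib_i$; $\Gamma:=\{\gamma\in\mathbb R^m: A(\gamma)\succeq0,\ \gamma_i\ge0\ \forall i\in[m_I]\}$. Assumption A: the QCQP feasible set is nonempty and some $\gamma^*$ with $\gamma^*_i\ge0$ ($i\in[m_I]$) has $A(\gamma^* )\succ0$. Assumption C: $\Gamma$ is a polyhedron. A nonempty face $\mathcal F$ of $\Gamma$ is semidefinite if no $\gamma\in\mathcal F$ has $A(\gamma)\succ0$. The quadratic eigenvalue multiplicity is the largest integer $k$ (with $N=nk$) such that each $A_i=I_k\otimes\mathcal A_i$ for some $\mathcal A_i\in\mathbb S^n$. $\operatorname{affdim}$ is the dimension of the affine hull. *)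

theory Defs
  imports "HOL-Analysis.Analysis"
begin

text \<open>Vectors of R^d are functions nat => real, only the coordinates
  0..d-1 are relevant (points are canonically taken to vanish outside). Matrices of
  size d are functions nat => nat => real, only entries with indices < d are relevant.
  A QCQP is given by N, m_I, m_E and families A, b, c indexed by i in 0..m, m = m_I + m_E.
  Multiplier vectors gamma in R^m use the coordinates 1..m (and vanish elsewhere).\<close>

definition supp_in :: "nat set \<Rightarrow> (nat \<Rightarrow> real) \<Rightarrow> bool" where
  "supp_in I x \<longleftrightarrow> (\<forall>j. j \<notin> I \<longrightarrow> x j = 0)"

definition sym_mat :: "nat \<Rightarrow> (nat \<Rightarrow> nat \<Rightarrow> real) \<Rightarrow> bool" where
  "sym_mat d M \<longleftrightarrow> (\<forall>i<d. \<forall>j<d. M i j = M j i)"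

definition quad_form :: "nat \<Rightarrow> (nat \<Rightarrow> nat \<Rightarrow> real) \<Rightarrow> (nat \<Rightarrow> real) \<Rightarrow> real" where
  "quad_form d M v = (\<Sum>i<d. \<Sum>j<d. v i * M i j * v j)"

definition psd :: "nat \<Rightarrow> (nat \<Rightarrow> nat \<Rightarrow> real) \<Rightarrow> bool" where
  "psd d M \<longleftrightarrow> sym_mat d M \<and> (\<forall>v. quad_form d M v \<ge> 0)"

definition pd :: "nat \<Rightarrow> (nat \<Rightarrow> nat \<Rightarrow> real) \<Rightarrow> bool" where
  "pd d M \<longleftrightarrow> sym_mat d M \<and> (\<forall>v. (\<exists>i<d. v i \<noteq> 0) \<longrightarrow> quad_form d M v > 0)"

definition frob :: "nat \<Rightarrow> (nat \<Rightarrow> nat \<Rightarrow> real) \<Rightarrow> (nat \<Rightarrow> nat \<Rightarrow> real) \<Rightarrow> real" where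
  "frob d P Q = (\<Sum>i<d. \<Sum>j<d. P i j * Q i j)"

definition qfun :: "nat \<Rightarrow> (nat \<Rightarrow> nat \<Rightarrow> nat \<Rightarrow> real) \<Rightarrow> (nat \<Rightarrow> nat \<Rightarrow> real)
      \<Rightarrow> (nat \<Rightarrow> real) \<Rightarrow> nat \<Rightarrow> (nat \<Rightarrow> real) \<Rightarrow> real" where
  "qfun N A b c i x = quad_form N (A i) x + 2 * (\<Sum>j<N. b i j * x j) + c i"

definition feas :: "nat \<Rightarrow> nat \<Rightarrow> nat \<Rightarrow> (nat \<Rightarrow> nat \<Rightarrow> nat \<Rightarrow> real) \<Rightarrow> (nat \<Rightarrow> nat \<Rightarrow> real)
      \<Rightarrow> (nat \<Rightarrow> real) \<Rightarrow> (nat \<Rightarrow> real) set" where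
  "feas N mI mE A b c = {x. supp_in {..<N} x
      \<and> (\<forall>i\<in>{1..mI}. qfun N A b c i x \<le> 0)
      \<and> (\<forall>i\<in>{mI+1..mI+mE}. qfun N A b c i x = 0)}"

definition Opt :: "nat \<Rightarrow> nat \<Rightarrow> nat \<Rightarrow> (nat \<Rightarrow> nat \<Rightarrow> nat \<Rightarrow> real) \<Rightarrow> (nat \<Rightarrow> nat \<Rightarrow> real)
      \<Rightarrow> (nat \<Rightarrow> real) \<Rightarrow> ereal" where
  "Opt N mI mE A b c = (INF x\<in>feas N mI mE A b c. ereal (qfun N A b c 0 x))"

definition Dset :: "nat \<Rightarrow> nat \<Rightarrow> nat \<Rightarrow> (nat \<Rightarrow> nat \<Rightarrow> nat \<Rightarrow> real) \<Rightarrow> (nat \<Rightarrow> nat \<Rightarrow> real)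
      \<Rightarrow> (nat \<Rightarrow> real) \<Rightarrow> ((nat \<Rightarrow> real) \<times> real) set" where
  "Dset N mI mE A b c = {(x, t). x \<in> feas N mI mE A b c \<and> qfun N A b c 0 x \<le> 2 * t}"

text \<open>Bordered matrices Q_i = [[c_i, b_i^T],[b_i, A_i]] and Y = [[1, x^T],[x, X]], size N+1,
  with index 0 for the border and index j+1 for coordinate j.\<close>
definition Qmat :: "(nat \<Rightarrow> nat \<Rightarrow> nat \<Rightarrow> real) \<Rightarrow> (nat \<Rightarrow> nat \<Rightarrow> real) \<Rightarrow> (nat \<Rightarrow> real)
      \<Rightarrow> nat \<Rightarrow> nat \<Rightarrow> nat \<Rightarrow> real" where
  "Qmat A b c i r s = (if r = 0 \<and> s = 0 then c i
      else if r = 0 then b i (s - 1) else if s = 0 then b i (r - 1)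
      else A i (r - 1) (s - 1))"

definition Ymat :: "(nat \<Rightarrow> real) \<Rightarrow> (nat \<Rightarrow> nat \<Rightarrow> real) \<Rightarrow> nat \<Rightarrow> nat \<Rightarrow> real" where
  "Ymat x X r s = (if r = 0 \<and> s = 0 then 1
      else if r = 0 then x (s - 1) else if s = 0 then x (r - 1)
      else X (r - 1) (s - 1))"

definition sdp_feas :: "nat \<Rightarrow> nat \<Rightarrow> nat \<Rightarrow> (nat \<Rightarrow> nat \<Rightarrow> nat \<Rightarrow> real) \<Rightarrow> (nat \<Rightarrow> nat \<Rightarrow> real)
      \<Rightarrow> (nat \<Rightarrow> real) \<Rightarrow> ((nat \<Rightarrow> real) \<times> (nat \<Rightarrow> nat \<Rightarrow> real)) set" where
  "sdp_feas N mI mE A b c = {(x, X). supp_in {..<N} x \<and> sym_mat N X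
      \<and> psd (N + 1) (Ymat x X)
      \<and> (\<forall>i\<in>{1..mI}. frob (N + 1) (Qmat A b c i) (Ymat x X) \<le> 0)
      \<and> (\<forall>i\<in>{mI+1..mI+mE}. frob (N + 1) (Qmat A b c i) (Ymat x X) = 0)}"

definition Opt_SDP :: "nat \<Rightarrow> nat \<Rightarrow> nat \<Rightarrow> (nat \<Rightarrow> nat \<Rightarrow> nat \<Rightarrow> real) \<Rightarrow> (nat \<Rightarrow> nat \<Rightarrow> real)
      \<Rightarrow> (nat \<Rightarrow> real) \<Rightarrow> ereal" where
  "Opt_SDP N mI mE A b c =
     (INF xX\<in>sdp_feas N mI mE A b c. ereal (frob (N + 1) (Qmat A b c 0) (Ymat (fst xX) (snd xX))))"

definition D_SDP :: "nat \<Rightarrow> nat \<Rightarrow> nat \<Rightarrow> (nat \<Rightarrow> nat \<Rightarrow> nat \<Rightarrow> real) \<Rightarrow> (nat \<Rightarrow> nat \<Rightarrow> real)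
      \<Rightarrow> (nat \<Rightarrow> real) \<Rightarrow> ((nat \<Rightarrow> real) \<times> real) set" where
  "D_SDP N mI mE A b c = {(x, t). \<exists>X. (x, X) \<in> sdp_feas N mI mE A b c
      \<and> frob (N + 1) (Qmat A b c 0) (Ymat x X) \<le> 2 * t}"

definition conv_pairs :: "((nat \<Rightarrow> real) \<times> real) set \<Rightarrow> ((nat \<Rightarrow> real) \<times> real) set" where
  "conv_pairs S = {(y, s). \<exists>(p::nat) u P. (\<forall>l<p. u l \<ge> 0 \<and> P l \<in> S) \<and> (\<Sum>l<p. u l) = 1
      \<and> y = (\<lambda>j. \<Sum>l<p. u l * fst (P l) j) \<and> s = (\<Sum>l<p. u l * snd (P l))}"

definition Agam :: "nat \<Rightarrow> (nat \<Rightarrow> nat \<Rightarrow> nat \<Rightarrow> real) \<Rightarrow> (nat \<Rightarrow> real) \<Rightarrow> nat \<Rightarrow> nat \<Rightarrow> real" where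
  "Agam m A \<gamma> r s = A 0 r s + (\<Sum>i\<in>{1..m}. \<gamma> i * A i r s)"

definition bgam :: "nat \<Rightarrow> nat \<Rightarrow> (nat \<Rightarrow> nat \<Rightarrow> real) \<Rightarrow> (nat \<Rightarrow> real) \<Rightarrow> nat \<Rightarrow> real" where
  "bgam N m b \<gamma> r = (if r < N then b 0 r + (\<Sum>i\<in>{1..m}. \<gamma> i * b i r) else 0)"

definition Gamma :: "nat \<Rightarrow> nat \<Rightarrow> nat \<Rightarrow> (nat \<Rightarrow> nat \<Rightarrow> nat \<Rightarrow> real) \<Rightarrow> (nat \<Rightarrow> real) set" where
  "Gamma N mI mE A = {\<gamma>. supp_in {1..mI+mE} \<gamma> \<and> psd N (Agam (mI+mE) A \<gamma>)
      \<and> (\<forall>i\<in>{1..mI}. \<gamma> i \<ge> 0)}"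

definition assumption_A :: "nat \<Rightarrow> nat \<Rightarrow> nat \<Rightarrow> (nat \<Rightarrow> nat \<Rightarrow> nat \<Rightarrow> real) \<Rightarrow> (nat \<Rightarrow> nat \<Rightarrow> real)
      \<Rightarrow> (nat \<Rightarrow> real) \<Rightarrow> bool" where
  "assumption_A N mI mE A b c \<longleftrightarrow> feas N mI mE A b c \<noteq> {}
      \<and> (\<exists>\<gamma>. (\<forall>i\<in>{1..mI}. \<gamma> i \<ge> 0) \<and> pd N (Agam (mI+mE) A \<gamma>))"

definition polyhedron_in :: "nat \<Rightarrow> (nat \<Rightarrow> real) set \<Rightarrow> bool" where
  "polyhedron_in m S \<longleftrightarrow> (\<exists>(p::nat) (a::nat \<Rightarrow> nat \<Rightarrow> real) (\<beta>::nat \<Rightarrow> real).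
      S = {\<gamma>. supp_in {1..m} \<gamma> \<and> (\<forall>l<p. (\<Sum>i\<in>{1..m}. a l i * \<gamma> i) \<le> \<beta> l)})"

definition assumption_C :: "nat \<Rightarrow> nat \<Rightarrow> nat \<Rightarrow> (nat \<Rightarrow> nat \<Rightarrow> nat \<Rightarrow> real) \<Rightarrow> bool" where
  "assumption_C N mI mE A \<longleftrightarrow> polyhedron_in (mI + mE) (Gamma N mI mE A)"

definition comb :: "real \<Rightarrow> (nat \<Rightarrow> real) \<Rightarrow> (nat \<Rightarrow> real) \<Rightarrow> nat \<Rightarrow> real" where
  "comb t x y = (\<lambda>j. (1 - t) * x j + t * y j)"

definition convex_fset :: "(nat \<Rightarrow> real) set \<Rightarrow> bool" where
  "convex_fset S \<longleftrightarrow> (\<forall>x\<in>S. \<forall>y\<in>S. \<forall>t. 0 \<le> t \<and> t \<le> 1 \<longrightarrow> comb t x y \<in> S)"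

definition face_in :: "(nat \<Rightarrow> real) set \<Rightarrow> (nat \<Rightarrow> real) set \<Rightarrow> bool" where
  "face_in F C \<longleftrightarrow> F \<subseteq> C \<and> convex_fset F
      \<and> (\<forall>x\<in>C. \<forall>y\<in>C. \<forall>t. 0 < t \<and> t < 1 \<and> comb t x y \<in> F \<longrightarrow> x \<in> F \<and> y \<in> F)"

definition semidefinite_face :: "nat \<Rightarrow> nat \<Rightarrow> nat \<Rightarrow> (nat \<Rightarrow> nat \<Rightarrow> nat \<Rightarrow> real) \<Rightarrow> (nat \<Rightarrow> real) set \<Rightarrow> bool" where
  "semidefinite_face N mI mE A F \<longleftrightarrow> F \<noteq> {} \<and> face_in F (Gamma N mI mE A)
      \<and> \<not> (\<exists>\<gamma>\<in>F. pd N (Agam (mI+mE) A \<gamma>))"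

definition lin_indep :: "nat \<Rightarrow> (nat \<Rightarrow> nat \<Rightarrow> real) \<Rightarrow> bool" where
  "lin_indep r v \<longleftrightarrow> (\<forall>u. (\<forall>j. (\<Sum>l<r. u l * v l j) = 0) \<longrightarrow> (\<forall>l<r. u l = 0))"

definition span_dim :: "(nat \<Rightarrow> real) set \<Rightarrow> nat" where
  "span_dim V = (GREATEST r. \<exists>v. (\<forall>l<r. v l \<in> V) \<and> lin_indep r v)"

definition affdim :: "(nat \<Rightarrow> real) set \<Rightarrow> int" where
  "affdim S = (if S = {} then -1 else int (span_dim {(\<lambda>j. x j - y j) | x y. x \<in> S \<and> y \<in> S}))"

definition is_kron_id :: "nat \<Rightarrow> nat \<Rightarrow> (nat \<Rightarrow> nat \<Rightarrow> real) \<Rightarrow> (nat \<Rightarrow> nat \<Rightarrow> real) \<Rightarrow> bool" where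
  "is_kron_id k n M' M \<longleftrightarrow> (\<forall>p<k. \<forall>q<k. \<forall>a<n. \<forall>a'<n.
      M (p * n + a) (q * n + a') = (if p = q then M' a a' else 0))"

definition quad_eig_mult :: "nat \<Rightarrow> nat \<Rightarrow> nat \<Rightarrow> (nat \<Rightarrow> nat \<Rightarrow> nat \<Rightarrow> real) \<Rightarrow> nat" where
  "quad_eig_mult N mI mE A = (GREATEST k. \<exists>n. N = n * k \<and>
      (\<forall>i\<in>{0..mI+mE}. \<exists>M'. sym_mat n M' \<and> is_kron_id k n M' (A i)))"

end

theory Submission
  imports Defs "HOL-Library.Function_Algebras"
begin

text \<open>Take \<open>A\<^sub>0\<close> diagonal with entry \<open>-1\<close> at the \<open>k\<close> coordinates \<open>pn\<close> and \<open>2\<close> elsewhere,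
  \<open>b\<^sub>0 = 1/2\<close> at the coordinates \<open>pn\<close>, and the constraints \<open>\<parallel>x\<parallel>\<^sup>2 \<le> 1\<close> and \<open>x\<^sub>p\<^sub>n \<ge> 0\<close>.
  All quadratic parts are block diagonal with \<open>k\<close> equal blocks, \<open>\<Gamma>\<close> is the orthant cut by
  \<open>\<gamma>\<^sub>1 \<ge> 1\<close>, and every \<open>b(\<gamma>)\<close> lives on the \<open>k\<close> coordinates \<open>pn\<close>, which bounds the affine
  dimension of any face. On feasible points the objective is
  \<open>\<Sum>\<^sub>p x\<^sub>p\<^sub>n(1 - x\<^sub>p\<^sub>n) + 2\<Sum>\<^sub>o\<^sub>t\<^sub>h\<^sub>e\<^sub>r x\<^sub>j\<^sup>2 \<ge> 0\<close>, whereas the relaxation admits \<open>x = 0\<close> with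
  \<open>X = e\<^sub>0e\<^sub>0\<^sup>T\<close>, of value \<open>A\<^sub>0(0,0) = -1\<close>.\<close>

interpretation fun_vec: vector_space "\<lambda>(c::real) (f::nat\<Rightarrow>real). (\<lambda>j. c * f j)"
  by unfold_locales (auto simp: fun_eq_iff algebra_simps)

lemma sum_fun_apply: "(\<Sum>i\<in>A. (f i :: 'a \<Rightarrow> 'b::comm_monoid_add)) x = (\<Sum>i\<in>A. f i x)"
  by (induction A rule: infinite_finite_induct) auto

subsection \<open>Dimension of sets of vectors with a common finite support\<close>

lemma lin_indep_inj_on: assumes "lin_indep r v" shows "inj_on v {..<r}"
proof (rule inj_onI, rule ccontr)
  fix a b assume ab: "a \<in> {..<r}" "b \<in> {..<r}" "v a = v b" "a \<noteq> b"
  define u where "u = (\<lambda>l. if l = a then (1::real) else if l = b then -1 else 0)"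
  have "(\<Sum>l<r. u l * v l j) = 0" for j
  proof -
    have "(\<Sum>l<r. u l * v l j) = (\<Sum>l\<in>{a,b}. u l * v l j)"
      by (rule sum.mono_neutral_right) (use ab in \<open>auto simp: u_def\<close>)
    also have "\<dots> = 0" using ab by (simp add: u_def)
    finally show ?thesis .
  qed
  with assms ab show False unfolding lin_indep_def u_def by force
qed

lemma lin_indep_imp_independent:
  assumes "lin_indep r v" shows "fun_vec.independent (v ` {..<r})"
proof (rule fun_vec.independent_if_scalars_zero)
  fix f w assume comb: "(\<Sum>x\<in>v ` {..<r}. (\<lambda>j. f x * x j)) = 0" and w: "w \<in> v ` {..<r}"
  have "(\<Sum>l<r. f (v l) * v l j) = 0" for j
    using fun_cong[OF comb, of j]
    by (simp add: sum_fun_apply sum.reindex[OF lin_indep_inj_on[OF assms]])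
  then have "\<forall>l<r. f (v l) = 0"
    using assms[unfolded lin_indep_def, rule_format, of "\<lambda>l. f (v l)"] by blast
  with w show "f w = 0" by auto
qed simp

lemma supported_in_span_units:
  assumes "finite S" and "\<forall>j. j \<notin> S \<longrightarrow> w j = 0"
  shows "w \<in> fun_vec.span ((\<lambda>a j. if j = a then 1 else 0) ` S)"
proof -
  have "w = (\<Sum>a\<in>S. (\<lambda>j. w a * (if j = a then 1 else 0)))"
    using assms by (auto simp: fun_eq_iff sum_fun_apply if_distrib cong: if_cong)
  also have "\<dots> \<in> fun_vec.span ((\<lambda>a j. if j = a then 1 else 0) ` S)"
    by (intro fun_vec.span_sum fun_vec.span_scale fun_vec.span_base) auto
  finally show ?thesis .
qed

lemma lin_indep_le_card_support:
  assumes fin: "finite S" and supp: "\<forall>l<r. \<forall>j. j \<notin> S \<longrightarrow> v l j = 0"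
    and li: "lin_indep r v"
  shows "r \<le> card S"
proof -
  let ?E = "(\<lambda>a j. if j = a then 1 else 0 :: real) ` S"
  have "v ` {..<r} \<subseteq> fun_vec.span ?E"
    using supported_in_span_units[OF fin] supp by blast
  then have "card (v ` {..<r}) \<le> card ?E"
    using fun_vec.independent_span_bound[OF _ lin_indep_imp_independent[OF li]] fin by auto
  also have "\<dots> \<le> card S" using fin by (rule card_image_le)
  finally show ?thesis using card_image[OF lin_indep_inj_on[OF li]] by simp
qed

lemma span_dim_le_card_support:
  assumes "finite S" and "\<forall>w\<in>V. \<forall>j. j \<notin> S \<longrightarrow> w j = 0"
  shows "span_dim V \<le> card S"
proof -
  let ?P = "\<lambda>r. \<exists>v. (\<forall>l<r. v l \<in> V) \<and> lin_indep r v"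
  have bound: "r \<le> card S" if "?P r" for r
    using that assms lin_indep_le_card_support by blast
  have "?P 0" by (auto simp: lin_indep_def)
  then have "?P (Greatest ?P)" using bound by (rule GreatestI_nat)
  then show ?thesis unfolding span_dim_def by (rule bound)
qed

lemma affdim_le_card_support:
  assumes "finite S" and "\<forall>x\<in>V. \<forall>j. j \<notin> S \<longrightarrow> x j = 0"
  shows "affdim V \<le> int (card S)"
proof -
  have "\<forall>w\<in>{(\<lambda>j. x j - y j) | x y. x \<in> V \<and> y \<in> V}. \<forall>j. j \<notin> S \<longrightarrow> w j = 0"
  proof (intro ballI allI impI)
    fix w j assume "w \<in> {(\<lambda>j. x j - y j) | x y. x \<in> V \<and> y \<in> V}" "j \<notin> S"
    then obtain x y where "w = (\<lambda>j. x j - y j)" "x \<in> V" "y \<in> V" by blast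
    moreover from this(2,3) have "x j = 0" "y j = 0" using assms(2) \<open>j \<notin> S\<close> by blast+
    ultimately show "w j = 0" by simp
  qed
  then have "span_dim {(\<lambda>j. x j - y j) | x y. x \<in> V \<and> y \<in> V} \<le> card S"
    using assms(1) span_dim_le_card_support by blast
  then show ?thesis by (simp add: affdim_def)
qed

subsection \<open>Diagonal matrices\<close>

definition diag_mat :: "(nat \<Rightarrow> real) \<Rightarrow> nat \<Rightarrow> nat \<Rightarrow> real" where
  "diag_mat e = (\<lambda>r s. if r = s then e r else 0)"

lemma sym_mat_diag_mat: "sym_mat d (diag_mat e)"
  by (auto simp: sym_mat_def diag_mat_def)

lemma quad_form_diag_mat: "quad_form d (diag_mat e) v = (\<Sum>j<d. e j * (v j)\<^sup>2)"
proof -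
  have "quad_form d (diag_mat e) v = (\<Sum>i<d. \<Sum>j<d. if j = i then v i * e i * v i else 0)"
    unfolding quad_form_def diag_mat_def by (intro sum.cong refl) auto
  then show ?thesis by (simp add: power2_eq_square mult_ac)
qed

lemma frob_diag_mat: "frob d P (diag_mat e) = (\<Sum>r<d. P r r * e r)"
  by (simp add: frob_def diag_mat_def if_distrib cong: if_cong)

lemma psd_diag_mat_iff: "psd d (diag_mat e) \<longleftrightarrow> (\<forall>j<d. e j \<ge> 0)"
proof
  assume psd: "psd d (diag_mat e)"
  show "\<forall>j<d. e j \<ge> 0"
  proof (intro allI impI)
    fix j assume "j < d"
    have "quad_form d (diag_mat e) (\<lambda>i. if i = j then 1 else 0)
        = (\<Sum>i<d. if i = j then e j else 0)"
      unfolding quad_form_diag_mat by (intro sum.cong refl) auto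
    with \<open>j < d\<close> have "quad_form d (diag_mat e) (\<lambda>i. if i = j then 1 else 0) = e j"
      by simp
    with psd show "e j \<ge> 0" by (metis psd_def)
  qed
qed (auto simp: psd_def sym_mat_diag_mat quad_form_diag_mat intro!: sum_nonneg)

lemma pd_diag_mat: assumes "\<forall>j<d. e j > 0" shows "pd d (diag_mat e)"
  unfolding pd_def
proof (intro conjI sym_mat_diag_mat allI impI)
  fix v :: "nat \<Rightarrow> real" assume "\<exists>i<d. v i \<noteq> 0"
  then obtain i where "i < d" "v i \<noteq> 0" by auto
  then show "0 < quad_form d (diag_mat e) v" unfolding quad_form_diag_mat
    using assms by (intro sum_pos2[of _ i]) (auto intro: less_imp_le)
qed

lemma Opt_nonneg:
  assumes "\<forall>x\<in>feas N mI mE A b c. qfun N A b c 0 x \<ge> 0"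
  shows "Opt N mI mE A b c \<ge> 0"
  using assms unfolding Opt_def by (auto intro!: INF_greatest)

lemma Opt_SDP_le:
  assumes "(x, X) \<in> sdp_feas N mI mE A b c"
  shows "Opt_SDP N mI mE A b c \<le> frob (N + 1) (Qmat A b c 0) (Ymat x X)"
  unfolding Opt_SDP_def by (rule INF_lower2[OF assms]) simp

lemma conv_pairs_snd_nonneg:
  assumes "\<forall>z\<in>S. snd z \<ge> 0" and "(y, s) \<in> conv_pairs S"
  shows "s \<ge> 0"
  using assms unfolding conv_pairs_def by (auto intro!: sum_nonneg mult_nonneg_nonneg)

lemma Dset_snd_nonneg:
  assumes "\<forall>x\<in>feas N mI mE A b c. qfun N A b c 0 x \<ge> 0"
  shows "\<forall>z\<in>Dset N mI mE A b c. snd z \<ge> 0"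
  using assms unfolding Dset_def by fastforce

definition X_e0 :: "nat \<Rightarrow> nat \<Rightarrow> real" where
  "X_e0 = diag_mat (\<lambda>r. if r = 0 then 1 else 0)"

lemma Ymat_zero_X_e0: "Ymat (\<lambda>_. 0) X_e0 = diag_mat (\<lambda>r. if r \<le> 1 then 1 else 0)"
  by (auto simp: fun_eq_iff Ymat_def X_e0_def diag_mat_def)

lemma frob_Ymat_zero_X_e0:
  assumes "N \<ge> 1" shows "frob (N + 1) P (Ymat (\<lambda>_. 0) X_e0) = P 0 0 + P 1 1"
proof -
  have "frob (N + 1) P (Ymat (\<lambda>_. 0) X_e0) = (\<Sum>r<N+1. P r r * (if r \<le> 1 then 1 else 0))"
    by (simp add: Ymat_zero_X_e0 frob_diag_mat)
  also have "\<dots> = (\<Sum>r\<in>{0,1}. P r r * (if r \<le> 1 then 1 else 0))"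
    by (rule sum.mono_neutral_right) (use assms in auto)
  finally show ?thesis by simp
qed

subsection \<open>The counterexample\<close>

definition cex_diag :: "nat \<Rightarrow> nat \<Rightarrow> nat \<Rightarrow> real" where
  "cex_diag n i r = (if i = 0 then (if r mod n = 0 then -1 else 2) else if i = 1 then 1 else 0)"

definition cex_A :: "nat \<Rightarrow> nat \<Rightarrow> nat \<Rightarrow> nat \<Rightarrow> real" where
  "cex_A n i = diag_mat (cex_diag n i)"

definition cex_b :: "nat \<Rightarrow> nat \<Rightarrow> nat \<Rightarrow> nat \<Rightarrow> real" where
  "cex_b n k i r = (if i = 0 then (if r < n * k \<and> r mod n = 0 then 1/2 else 0)
     else if 2 \<le> i \<and> i \<le> k + 1 \<and> r = (i - 2) * n then -1/2 else 0)"

definition cex_c :: "nat \<Rightarrow> real" where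
  "cex_c i = (if i = 1 then -1 else 0)"

abbreviation cex_feas :: "nat \<Rightarrow> nat \<Rightarrow> (nat \<Rightarrow> real) set" where
  "cex_feas n k \<equiv> feas (n * k) (k + 1) 0 (cex_A n) (cex_b n k) cex_c"

abbreviation cex_qfun :: "nat \<Rightarrow> nat \<Rightarrow> nat \<Rightarrow> (nat \<Rightarrow> real) \<Rightarrow> real" where
  "cex_qfun n k \<equiv> qfun (n * k) (cex_A n) (cex_b n k) cex_c"

lemma mult_mod_eq_iff:
  fixes a a' n p q :: nat assumes "a < n" "a' < n"
  shows "p * n + a = q * n + a' \<longleftrightarrow> p = q \<and> a = a'"
  by (metis assms add_right_cancel mod_mult_self3 mod_less mult_right_cancel
      not_less_zero zero_less_iff_neq_zero)

lemma cex_sym_supp: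
  assumes "n \<ge> 1"
  shows "sym_mat (n * k) (cex_A n i) \<and> supp_in {..<n * k} (cex_b n k i)"
proof -
  have "(i - 2) * n < n * k" if "2 \<le> i" "i \<le> k + 1"
    using that assms by (simp add: mult.commute)
  then show ?thesis
    by (auto simp: cex_A_def sym_mat_diag_mat supp_in_def cex_b_def)
qed

lemma cex_Agam: "Agam (k + 1) (cex_A n) \<gamma> = diag_mat (\<lambda>r. cex_diag n 0 r + \<gamma> 1)"
proof -
  have "(\<Sum>i\<in>{1..k+1}. \<gamma> i * cex_diag n i r) = (\<Sum>i\<in>{1..k+1}. if i = 1 then \<gamma> 1 else 0)" for r
    by (intro sum.cong refl) (auto simp: cex_diag_def)
  then show ?thesis
    by (auto simp: fun_eq_iff Agam_def cex_A_def diag_mat_def)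
qed

lemma cex_qfun_ball: "cex_qfun n k 1 x = (\<Sum>j<n * k. (x j)\<^sup>2) - 1"
  by (simp add: qfun_def cex_A_def quad_form_diag_mat cex_diag_def cex_b_def cex_c_def)

lemma cex_qfun_sign:
  assumes "n \<ge> 1" "p < k"
  shows "cex_qfun n k (p + 2) x = - x (p * n)"
proof -
  have "(\<Sum>j<n * k. cex_b n k (p + 2) j * x j)
      = (\<Sum>j<n * k. if j = p * n then - (1/2) * x (p * n) else 0)"
    by (intro sum.cong refl) (use assms in \<open>auto simp: cex_b_def\<close>)
  moreover have "p * n < n * k" using assms by (simp add: mult.commute)
  ultimately have "(\<Sum>j<n * k. cex_b n k (p + 2) j * x j) = - (1/2) * x (p * n)"
    by simp
  then show ?thesis
    by (simp add: qfun_def cex_A_def quad_form_diag_mat cex_diag_def cex_c_def)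
qed

lemma cex_qfun_objective:
  "cex_qfun n k 0 x = (\<Sum>j<n * k. cex_diag n 0 j * (x j)\<^sup>2 + 2 * (cex_b n k 0 j * x j))"
  by (simp add: qfun_def cex_A_def quad_form_diag_mat cex_c_def sum.distrib sum_distrib_left)

lemma cex_objective_nonneg:
  assumes n: "n \<ge> 1" and x: "x \<in> cex_feas n k"
  shows "cex_qfun n k 0 x \<ge> 0"
proof -
  have constr: "cex_qfun n k i x \<le> 0" if "i \<in> {1..k+1}" for i
    using x that by (simp add: feas_def)
  have in_ball: "(\<Sum>j<n * k. (x j)\<^sup>2) \<le> 1"
    using constr[of 1] cex_qfun_ball[of n k x] by simp
  have "0 \<le> x j \<and> x j \<le> 1" if j: "j < n * k" "j mod n = 0" for j
  proof
    have "j div n < k" "j div n * n = j"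
      using j by (auto simp: less_mult_imp_div_less mult.commute elim: dvdE)
    then show "0 \<le> x j"
      using constr[of "j div n + 2"] cex_qfun_sign[OF n, of "j div n" k x] by simp
    have "(x j)\<^sup>2 \<le> 1"
      using in_ball member_le_sum[of j "{..<n * k}" "\<lambda>j. (x j)\<^sup>2"] j by simp
    then show "x j \<le> 1" by (simp add: abs_square_le_1)
  qed
  note bounds = this
  have "0 \<le> cex_diag n 0 j * (x j)\<^sup>2 + 2 * (cex_b n k 0 j * x j)" if j: "j < n * k" for j
  proof (cases "j mod n = 0")
    case True
    then have "cex_diag n 0 j * (x j)\<^sup>2 + 2 * (cex_b n k 0 j * x j) = x j * (1 - x j)"
      using j by (simp add: cex_diag_def cex_b_def power2_eq_square algebra_simps)
    with bounds[OF j True] show ?thesis by simp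
  next
    case False
    then show ?thesis by (simp add: cex_diag_def cex_b_def)
  qed
  then show ?thesis unfolding cex_qfun_objective by (intro sum_nonneg) simp
qed

lemma cex_sdp_point:
  assumes "n \<ge> 1" "k \<ge> 1"
  shows "((\<lambda>_. 0), X_e0) \<in> sdp_feas (n * k) (k + 1) 0 (cex_A n) (cex_b n k) cex_c"
    and "frob (n * k + 1) (Qmat (cex_A n) (cex_b n k) cex_c 0) (Ymat (\<lambda>_. 0) X_e0) = -1"
proof -
  have N: "n * k \<ge> 1" using assms by simp
  show "frob (n * k + 1) (Qmat (cex_A n) (cex_b n k) cex_c 0) (Ymat (\<lambda>_. 0) X_e0) = -1"
    unfolding frob_Ymat_zero_X_e0[OF N]
    by (simp add: Qmat_def cex_A_def diag_mat_def cex_diag_def cex_c_def)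
  have "\<forall>i\<in>{1..k+1}. frob (n * k + 1) (Qmat (cex_A n) (cex_b n k) cex_c i) (Ymat (\<lambda>_. 0) X_e0) \<le> 0"
    unfolding frob_Ymat_zero_X_e0[OF N]
    by (auto simp: Qmat_def cex_A_def diag_mat_def cex_diag_def cex_c_def)
  then show "((\<lambda>_. 0), X_e0) \<in> sdp_feas (n * k) (k + 1) 0 (cex_A n) (cex_b n k) cex_c"
    using sym_mat_diag_mat[of "n * k" "\<lambda>r. if r = 0 then 1 else 0"]
    by (simp add: sdp_feas_def supp_in_def Ymat_zero_X_e0 psd_diag_mat_iff flip: X_e0_def)
qed

lemma cex_assumption_A:
  assumes "n \<ge> 1" "k \<ge> 1"
  shows "assumption_A (n * k) (k + 1) 0 (cex_A n) (cex_b n k) cex_c"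
proof -
  have "(\<lambda>_. 0) \<in> cex_feas n k"
    by (simp add: feas_def supp_in_def qfun_def quad_form_def cex_c_def)
  moreover have "pd (n * k) (Agam (k + 1) (cex_A n) (\<lambda>i. if i = 1 then 2 else 0))"
    unfolding cex_Agam by (rule pd_diag_mat) (auto simp: cex_diag_def)
  ultimately show ?thesis
    unfolding assumption_A_def by (auto intro!: exI[of _ "\<lambda>i. if i = 1 then 2 else 0"])
qed

lemma cex_Gamma:
  assumes "n \<ge> 1" "k \<ge> 1"
  shows "Gamma (n * k) (k + 1) 0 (cex_A n)
    = {\<gamma>. supp_in {1..k+1} \<gamma> \<and> (\<forall>i\<in>{1..k+1}. \<gamma> i \<ge> 0) \<and> \<gamma> 1 \<ge> 1}"
proof -
  have "(\<forall>j<n * k. cex_diag n 0 j + c \<ge> 0) \<longleftrightarrow> c \<ge> 1" for c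
  proof
    assume "\<forall>j<n * k. cex_diag n 0 j + c \<ge> 0"
    then have "cex_diag n 0 0 + c \<ge> 0" using assms by simp
    then show "c \<ge> 1" by (simp add: cex_diag_def)
  qed (auto simp: cex_diag_def)
  then have psd_iff: "psd (n * k) (diag_mat (\<lambda>r. cex_diag n 0 r + \<gamma> 1)) \<longleftrightarrow> \<gamma> 1 \<ge> 1" for \<gamma>
    unfolding psd_diag_mat_iff by blast
  show ?thesis unfolding Gamma_def add_0_right cex_Agam psd_iff by auto
qed

lemma cex_assumption_C:
  assumes "n \<ge> 1" "k \<ge> 1"
  shows "assumption_C (n * k) (k + 1) 0 (cex_A n)"
proof -
  \<comment> \<open>rows \<open>l \<le> k\<close>: \<open>-\<gamma>\<^sub>l\<^sub>+\<^sub>1 \<le> 0\<close>; row \<open>k + 1\<close>: \<open>-\<gamma>\<^sub>1 \<le> -1\<close>\<close>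
  define a :: "nat \<Rightarrow> nat \<Rightarrow> real" where
    "a = (\<lambda>l i. if i = (if l < k + 1 then l + 1 else 1) then -1 else 0)"
  define \<beta> :: "nat \<Rightarrow> real" where "\<beta> = (\<lambda>l. if l < k + 1 then 0 else -1)"
  have row: "(\<Sum>i\<in>{1..k+1}. a l i * \<gamma> i) = - \<gamma> (if l < k + 1 then l + 1 else 1)" if "l < k + 2"
    for l \<gamma>
  proof -
    let ?i = "if l < k + 1 then l + 1 else 1"
    have "(\<Sum>i\<in>{1..k+1}. a l i * \<gamma> i) = (\<Sum>i\<in>{1..k+1}. if i = ?i then - \<gamma> ?i else 0)"
      by (intro sum.cong refl) (auto simp: a_def)
    also have "\<dots> = - \<gamma> ?i" using that by simp
    finally show ?thesis .
  qed
  have "(\<forall>l<k+2. (\<Sum>i\<in>{1..k+1}. a l i * \<gamma> i) \<le> \<beta> l)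
      \<longleftrightarrow> (\<forall>i\<in>{1..k+1}. \<gamma> i \<ge> 0) \<and> \<gamma> 1 \<ge> 1" for \<gamma>
  proof
    assume rows: "\<forall>l<k+2. (\<Sum>i\<in>{1..k+1}. a l i * \<gamma> i) \<le> \<beta> l"
    have "\<gamma> i \<ge> 0" if "i \<in> {1..k+1}" for i
    proof -
      have l: "i - 1 < k + 2" "i - 1 < k + 1" "i - 1 + 1 = i" using that by auto
      have "(\<Sum>i'\<in>{1..k+1}. a (i - 1) i' * \<gamma> i') = - \<gamma> i"
        using row[OF l(1), of \<gamma>] l by simp
      moreover have "\<beta> (i - 1) = 0" using l by (simp add: \<beta>_def)
      ultimately show ?thesis using rows[rule_format, OF l(1)] by linarith
    qed
    moreover have "\<gamma> 1 \<ge> 1"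
    proof -
      have "(\<Sum>i'\<in>{1..k+1}. a (k + 1) i' * \<gamma> i') = - \<gamma> 1"
        using row[of "k + 1" \<gamma>] by simp
      moreover have "\<beta> (k + 1) = -1" by (simp add: \<beta>_def)
      ultimately show ?thesis using rows[rule_format, of "k + 1"] by linarith
    qed
    ultimately show "(\<forall>i\<in>{1..k+1}. \<gamma> i \<ge> 0) \<and> \<gamma> 1 \<ge> 1" by blast
  next
    assume "(\<forall>i\<in>{1..k+1}. \<gamma> i \<ge> 0) \<and> \<gamma> 1 \<ge> 1"
    then show "\<forall>l<k+2. (\<Sum>i\<in>{1..k+1}. a l i * \<gamma> i) \<le> \<beta> l"
      using row by (auto simp: \<beta>_def)
  qed
  then have "Gamma (n * k) (k + 1) 0 (cex_A n)
      = {\<gamma>. supp_in {1..k+1} \<gamma> \<and> (\<forall>l<k+2. (\<Sum>i\<in>{1..k+1}. a l i * \<gamma> i) \<le> \<beta> l)}"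
    unfolding cex_Gamma[OF assms] by auto
  then show ?thesis
    unfolding assumption_C_def polyhedron_in_def by auto
qed

lemma cex_quad_eig_mult:
  assumes n: "n \<ge> 1" and k: "k \<ge> 1"
  shows "quad_eig_mult (n * k) (k + 1) 0 (cex_A n) = k"
  unfolding quad_eig_mult_def
proof (rule Greatest_equality)
  have "is_kron_id k n (diag_mat (cex_diag n i)) (cex_A n i)" for i
    unfolding is_kron_id_def cex_A_def diag_mat_def by (simp add: mult_mod_eq_iff cex_diag_def)
  then show "\<exists>n'. n * k = n' * k \<and> (\<forall>i\<in>{0..k+1+0}. \<exists>M'. sym_mat n' M' \<and> is_kron_id k n' M' (cex_A n i))"
    using sym_mat_diag_mat by blast
next
  fix y assume "\<exists>n'. n * k = n' * y \<and> (\<forall>i\<in>{0..k+1+0}. \<exists>M'. sym_mat n' M' \<and> is_kron_id y n' M' (cex_A n i))"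
  then obtain n' M' where e: "n * k = n' * y" and kron: "is_kron_id y n' M' (cex_A n 0)" by force
  show "y \<le> k"
  proof (rule ccontr)
    assume "\<not> y \<le> k"
    then have "1 < y" "n * k < n * y" using n k by auto
    then have "n' < n" unfolding e by simp
    have "0 < n'" using e n k by (cases n') auto
    \<comment> \<open>the first two diagonal blocks agree, but \<open>A\<^sub>0(0,0) = -1\<close> and \<open>A\<^sub>0(n',n') = 2\<close>\<close>
    have "cex_A n 0 0 0 = M' 0 0" "cex_A n 0 n' n' = M' 0 0"
      using kron[unfolded is_kron_id_def, rule_format, of 0 0 0 0]
        kron[unfolded is_kron_id_def, rule_format, of 1 1 0 0] \<open>0 < n'\<close> \<open>1 < y\<close> by simp_all
    with \<open>n' < n\<close> \<open>0 < n'\<close> show False by (simp add: cex_A_def diag_mat_def cex_diag_def)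
  qed
qed

lemma cex_affdim_bgam:
  "affdim (bgam (n * k) (k + 1) (cex_b n k) ` F) \<le> int k"
proof -
  let ?S = "(\<lambda>p. p * n) ` {..<k}"
  have "bgam (n * k) (k + 1) (cex_b n k) \<gamma> j = 0" if j: "j \<notin> ?S" for \<gamma> j
  proof -
    have "\<not> (j < n * k \<and> j mod n = 0)"
    proof
      assume "j < n * k \<and> j mod n = 0"
      then have "j div n \<in> {..<k}" "j = j div n * n"
        by (metis lessThan_iff less_mult_imp_div_less mult.commute,
            metis div_mult_mod_eq add_0_right)
      with j show False by blast
    qed
    moreover have "j \<noteq> (i - 2) * n" if "2 \<le> i" "i \<le> k + 1" for i
    proof -
      have "i - 2 \<in> {..<k}" using that by auto
      with j show ?thesis by blast
    qed
    ultimately have "cex_b n k i j = 0" for i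
      unfolding cex_b_def by auto
    then show ?thesis by (simp add: bgam_def)
  qed
  then have "affdim (bgam (n * k) (k + 1) (cex_b n k) ` F) \<le> int (card ?S)"
    by (intro affdim_le_card_support) auto
  also have "card ?S \<le> k" using card_image_le[of "{..<k}" "\<lambda>p. p * n"] by simp
  finally show ?thesis by simp
qed

theorem mainTheorem15:
  fixes n k :: nat
  assumes "n \<ge> 1" and "k \<ge> 1"
  shows "\<exists>(N::nat) (mI::nat) (mE::nat) (A::nat \<Rightarrow> nat \<Rightarrow> nat \<Rightarrow> real) (b::nat \<Rightarrow> nat \<Rightarrow> real) (c::nat \<Rightarrow> real).
     N = n * k \<and> mI + mE = k + 1
     \<and> (\<forall>i\<in>{0..mI+mE}. sym_mat N (A i) \<and> supp_in {..<N} (b i))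
     \<and> assumption_A N mI mE A b c
     \<and> assumption_C N mI mE A
     \<and> quad_eig_mult N mI mE A = k
     \<and> (\<forall>F. semidefinite_face N mI mE A F \<longrightarrow> int k \<ge> affdim (bgam N (mI+mE) b ` F))
     \<and> Opt N mI mE A b c \<noteq> Opt_SDP N mI mE A b c
     \<and> conv_pairs (Dset N mI mE A b c) \<noteq> D_SDP N mI mE A b c"
proof -
  let ?cex = "\<lambda>F. F (n * k) (k + 1) 0 (cex_A n) (cex_b n k) cex_c"
  have nonneg: "\<forall>x\<in>cex_feas n k. cex_qfun n k 0 x \<ge> 0"
    using cex_objective_nonneg[OF assms(1)] by blast
  note sdp = cex_sdp_point[OF assms]
  have "?cex Opt_SDP \<le> ereal (-1)"
    using Opt_SDP_le[OF sdp(1)] sdp(2) by simp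
  also have "\<dots> < 0" by simp
  also have "0 \<le> ?cex Opt" using Opt_nonneg[OF nonneg] .
  finally have "?cex Opt \<noteq> ?cex Opt_SDP" by simp
  moreover have "((\<lambda>_. 0), -1/2) \<in> ?cex D_SDP"
    unfolding D_SDP_def using sdp by auto
  moreover have "((\<lambda>_. 0), -1/2) \<notin> conv_pairs (?cex Dset)"
    using conv_pairs_snd_nonneg[OF Dset_snd_nonneg[OF nonneg]] by fastforce
  ultimately show ?thesis
    using cex_sym_supp[OF assms(1)] cex_assumption_A[OF assms] cex_assumption_C[OF assms]
      cex_quad_eig_mult[OF assms] cex_affdim_bgam
    by (intro exI[of _ "n * k"] exI[of _ "k + 1"] exI[of _ 0] exI[of _ "cex_A n"]
        exI[of _ "cex_b n k"] exI[of _ cex_c] conjI allI impI) auto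
qed

end
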